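(* Let $A\subset\mathbb{R}^3$ be a $2+1$-complex. Then $A\subset [Extr(A)]^{rc}$.
   Context: A horizontal segment/line is one contained in a plane $\{z=c\}$; a vertical segment/line is one parallel to the $z$ axis. A $2+1$-complex is a closed subset of $\mathbb{R}^3$ that is the union of a finite list $L$ of elements, each of one of the following kinds: points; relatively open horizontal segments whose two endpoints belong to $L$; relatively open vertical segments whose two endpoints belong to $L$; relatively open triangles in a horizontal plane whose three boundary segments belong to $L$; relatively open rectangles in a vertical plane, two of whose sides are parallel to the $z$ axis, whose four boundary segments belong to $L$; open subsets of $\mathbb{R}^3$ whose boundary is a union of elements of the previous kinds, all belonging to $L$. A point $p\in A$ is extremal if no relatively open horizontal or vertical segment contained in $A$ contains $p$; $Extr(A)$ is the set of extremal points. A function $f:\mathbb{R}^3\to\mathbb{R}$ is $2+1$-convex if its restriction to every horizontal and every vertical line is convex; for compact $S$, $S^{rc}=\{x: f(x)\le\sup_S f\text{ for every } 2+1\text{-convex } f\}$. *)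

theory Defs
  imports "HOL-Analysis.Analysis"
begin

type_synonym pt3 = "real ^ 3"

definition horiz_pair :: "pt3 \<Rightarrow> pt3 \<Rightarrow> bool" where
  "horiz_pair a b \<longleftrightarrow> a \<noteq> b \<and> a$3 = b$3"

definition vert_pair :: "pt3 \<Rightarrow> pt3 \<Rightarrow> bool" where
  "vert_pair a b \<longleftrightarrow> a \<noteq> b \<and> a$1 = b$1 \<and> a$2 = b$2"

definition ez :: pt3 where "ez = axis 3 1"

definition low_element :: "pt3 set set \<Rightarrow> pt3 set \<Rightarrow> bool" where
  "low_element L E \<longleftrightarrow>
     (\<exists>p. E = {p})
   \<or> (\<exists>a b. horiz_pair a b \<and> E = open_segment a b \<and> {a} \<in> L \<and> {b} \<in> L)
   \<or> (\<exists>a b. vert_pair a b \<and> E = open_segment a b \<and> {a} \<in> L \<and> {b} \<in> L)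
   \<or> (\<exists>a b c. a$3 = b$3 \<and> a$3 = c$3 \<and> \<not> collinear {a, b, c}
        \<and> E = rel_interior (convex hull {a, b, c})
        \<and> open_segment a b \<in> L \<and> open_segment b c \<in> L \<and> open_segment a c \<in> L)
   \<or> (\<exists>a b t. horiz_pair a b \<and> t > 0
        \<and> E = rel_interior (convex hull {a, b, a + t *\<^sub>R ez, b + t *\<^sub>R ez})
        \<and> open_segment a b \<in> L
        \<and> open_segment (a + t *\<^sub>R ez) (b + t *\<^sub>R ez) \<in> L
        \<and> open_segment a (a + t *\<^sub>R ez) \<in> L
        \<and> open_segment b (b + t *\<^sub>R ez) \<in> L)"

definition complex_element :: "pt3 set set \<Rightarrow> pt3 set \<Rightarrow> bool" where
  "complex_element L E \<longleftrightarrow> low_element L E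
   \<or> (open E \<and> bounded E \<and>
       (\<exists>S. S \<subseteq> {F \<in> L. low_element L F} \<and> frontier E = \<Union>S))"

definition complex21 :: "pt3 set \<Rightarrow> bool" where
  "complex21 A \<longleftrightarrow> closed A \<and>
     (\<exists>L. finite L \<and> A = \<Union>L \<and> (\<forall>E\<in>L. complex_element L E))"

definition Extr :: "pt3 set \<Rightarrow> pt3 set" where
  "Extr A = {p \<in> A. \<not> (\<exists>a b. (horiz_pair a b \<or> vert_pair a b)
                          \<and> open_segment a b \<subseteq> A \<and> p \<in> open_segment a b)}"

definition convex21 :: "(pt3 \<Rightarrow> real) \<Rightarrow> bool" where
  "convex21 f \<longleftrightarrow> (\<forall>p v. (v$3 = 0 \<or> (v$1 = 0 \<and> v$2 = 0)) \<longrightarrow>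
       convex_on UNIV (\<lambda>t::real. f (p + t *\<^sub>R v)))"

text \<open>x \<in> S^rc iff f x \<le> sup_S f for all 2+1-convex f (sup taken in the extended reals,
  so expressed via upper bounds).\<close>

definition rc_hull :: "pt3 set \<Rightarrow> pt3 set" where
  "rc_hull S = {x. \<forall>f. convex21 f \<longrightarrow> (\<forall>c. (\<forall>y\<in>S. f y \<le> c) \<longrightarrow> f x \<le> c)}"

end

theory Submission
  imports Defs
begin

(* A 2+1-convex function f is convex along every coordinate axis. Such a function is bounded
   above on boxes and therefore locally Lipschitz, in particular continuous, so it attains its
   maximum on the compact set A; among the maximizers choose one, e, of largest norm. If e lay
   inside a horizontal or vertical segment contained in A, convexity of f along the segment
   would make the nearby points e + h v and e - h v maximizers as well, and by the
   parallelogram law one of them is farther from the origin than e. So e is extremal and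
   f x <= f e <= sup f over Extr A. *)

lemma convex_on_abs_diff_le:
  fixes \<phi> :: "real \<Rightarrow> real"
  assumes conv: "convex_on UNIV \<phi>" and U: "\<And>t. \<bar>t\<bar> \<le> 1 \<Longrightarrow> \<phi> t \<le> U" and s: "\<bar>s\<bar> \<le> 1"
  shows "\<bar>\<phi> s - \<phi> 0\<bar> \<le> \<bar>s\<bar> * (U - \<phi> 0)"
proof -
  define e :: real where "e = sgn s"
  have e: "\<bar>e\<bar> \<le> 1" "s = \<bar>s\<bar> * e" by (auto simp: e_def sgn_if)
  have "\<phi> s = \<phi> ((1 - \<bar>s\<bar>) *\<^sub>R 0 + \<bar>s\<bar> *\<^sub>R e)"
    using e by simp
  also have "\<dots> \<le> (1 - \<bar>s\<bar>) * \<phi> 0 + \<bar>s\<bar> * \<phi> e"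
    using s by (intro convex_onD[OF conv]) auto
  also have "\<dots> \<le> (1 - \<bar>s\<bar>) * \<phi> 0 + \<bar>s\<bar> * U"
    using U[OF e(1)] by (intro add_left_mono mult_left_mono) auto
  finally have upper: "\<phi> s - \<phi> 0 \<le> \<bar>s\<bar> * (U - \<phi> 0)"
    by (simp add: algebra_simps)
  define l where "l = \<bar>s\<bar> / (1 + \<bar>s\<bar>)"
  have l: "0 \<le> l" "l \<le> 1" "1 - l = 1 / (1 + \<bar>s\<bar>)" by (auto simp: l_def field_simps)
  have "\<phi> 0 = \<phi> ((1 - l) *\<^sub>R s + l *\<^sub>R (- e))"
    using e by (simp add: l_def field_simps)
  also have "\<dots> \<le> (1 - l) * \<phi> s + l * \<phi> (- e)"
    using l by (intro convex_onD[OF conv]) auto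
  also have "\<dots> \<le> (1 - l) * \<phi> s + l * U"
    using U[of "- e"] e(1) l by (intro add_left_mono mult_left_mono) auto
  also have "\<dots> = (\<phi> s + \<bar>s\<bar> * U) / (1 + \<bar>s\<bar>)"
    unfolding l(3) by (simp add: l_def add_divide_distrib)
  finally have "(1 + \<bar>s\<bar>) * \<phi> 0 \<le> \<phi> s + \<bar>s\<bar> * U"
    by (simp add: pos_le_divide_eq mult.commute)
  then have lower: "\<phi> 0 - \<phi> s \<le> \<bar>s\<bar> * (U - \<phi> 0)"
    by (simp add: algebra_simps)
  from upper lower show ?thesis by linarith
qed

definition coordinatewise_convex :: "(real ^ 'n \<Rightarrow> real) \<Rightarrow> bool" where
  "coordinatewise_convex f \<longleftrightarrow> (\<forall>x i. convex_on UNIV (\<lambda>t. f (x + t *\<^sub>R axis i 1)))"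

lemma coordinatewise_convex_bounded_above_on_box:
  fixes f :: "real ^ 'n \<Rightarrow> real"
  assumes f: "coordinatewise_convex f"
  shows "\<exists>U. \<forall>q. (\<forall>i. \<bar>q$i - p$i\<bar> \<le> r) \<longrightarrow> f q \<le> U"
proof -
  have "\<exists>U. \<forall>q. (\<forall>i\<in>I. \<bar>q$i - p$i\<bar> \<le> r) \<and> (\<forall>i. i \<notin> I \<longrightarrow> q$i = c$i) \<longrightarrow> f q \<le> U"
    if "finite I" for I and c :: "real ^ 'n"
    using that
  proof (induction I arbitrary: c rule: finite_induct)
    case empty
    show ?case by (rule exI[of _ "f c"]) (auto simp flip: vec_eq_iff)
  next
    case (insert j I)
    define face where "face s = c + (p$j + s - c$j) *\<^sub>R axis j 1" for s
    obtain U1 where U1: "\<And>q. \<forall>i\<in>I. \<bar>q$i - p$i\<bar> \<le> r \<Longrightarrow>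
        \<forall>i. i \<notin> I \<longrightarrow> q$i = face (- r) $ i \<Longrightarrow> f q \<le> U1"
      using insert.IH by blast
    obtain U2 where U2: "\<And>q. \<forall>i\<in>I. \<bar>q$i - p$i\<bar> \<le> r \<Longrightarrow>
        \<forall>i. i \<notin> I \<longrightarrow> q$i = face r $ i \<Longrightarrow> f q \<le> U2"
      using insert.IH by blast
    show ?case
    proof (intro exI allI impI)
      fix q
      assume q: "(\<forall>i\<in>insert j I. \<bar>q$i - p$i\<bar> \<le> r) \<and> (\<forall>i. i \<notin> insert j I \<longrightarrow> q$i = c$i)"
      define \<phi> where "\<phi> t = f (q + t *\<^sub>R axis j 1)" for t
      have "convex_on {p$j - r - q$j .. p$j + r - q$j} \<phi>"
        using f unfolding coordinatewise_convex_def \<phi>_def by (blast intro: convex_on_subset)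
      then have "\<phi> 0 \<le> max (\<phi> (p$j - r - q$j)) (\<phi> (p$j + r - q$j))"
        using q by (intro convex_on_le_max) (auto simp: abs_le_iff)
      also have "\<dots> \<le> max U1 U2"
        using q insert.hyps(2) unfolding \<phi>_def
        by (intro max.mono U1 U2) (auto simp: axis_def face_def)
      finally show "f q \<le> max U1 U2" by (simp add: \<phi>_def)
    qed
  qed
  from this[of UNIV p] show ?thesis by simp
qed

lemma coordinatewise_convex_axis_step:
  fixes f :: "real ^ 'n \<Rightarrow> real"
  assumes f: "coordinatewise_convex f"
    and U: "\<And>q. \<forall>i. \<bar>q$i - p$i\<bar> \<le> 2 \<Longrightarrow> f q \<le> U"
    and x: "\<forall>i. \<bar>x$i - p$i\<bar> \<le> 1" and s: "\<bar>s\<bar> \<le> 1"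
  shows "\<bar>f (x + s *\<^sub>R axis j 1) - f x\<bar> \<le> \<bar>s\<bar> * (U - f x)"
proof -
  have "\<bar>f (x + s *\<^sub>R axis j 1) - f (x + 0 *\<^sub>R axis j 1)\<bar>
      \<le> \<bar>s\<bar> * (U - f (x + 0 *\<^sub>R axis j 1))"
  proof (rule convex_on_abs_diff_le[where \<phi> = "\<lambda>t. f (x + t *\<^sub>R axis j 1)", OF _ _ s])
    show "convex_on UNIV (\<lambda>t. f (x + t *\<^sub>R axis j 1))"
      using f by (simp add: coordinatewise_convex_def)
    show "f (x + t *\<^sub>R axis j 1) \<le> U" if "\<bar>t\<bar> \<le> 1" for t
    proof (rule U, rule allI)
      fix i
      have "\<bar>(x + t *\<^sub>R axis j 1)$i - p$i\<bar> \<le> \<bar>x$i - p$i\<bar> + \<bar>t\<bar>"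
        by (simp add: axis_def abs_triangle_ineq[THEN order_trans[rotated]])
      then show "\<bar>(x + t *\<^sub>R axis j 1)$i - p$i\<bar> \<le> 2"
        using x[rule_format, of i] that by linarith
    qed
  qed
  then show ?thesis by simp
qed

lemma coordinatewise_convex_local_estimate:
  fixes f :: "real ^ 'n \<Rightarrow> real"
  assumes f: "coordinatewise_convex f"
    and U: "\<And>q. \<forall>i. \<bar>q$i - p$i\<bar> \<le> 2 \<Longrightarrow> f q \<le> U"
    and d: "d \<le> 1" and I: "finite I"
    and q: "\<forall>i. \<bar>q$i - p$i\<bar> \<le> d" "\<forall>i. i \<notin> I \<longrightarrow> q$i = p$i"
  shows "\<bar>f q - f p\<bar> \<le> (2 ^ card I - 1) * d * (U - f p)"
  using I q
proof (induction I arbitrary: q rule: finite_induct)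
  case empty
  then have "q = p" by (simp add: vec_eq_iff)
  then show ?case by simp
next
  case (insert j I)
  define D where "D = U - f p"
  have D: "0 \<le> D" using U[of p] by (simp add: D_def)
  have qj: "\<bar>q$j - p$j\<bar> \<le> d" using insert.prems(1) by blast
  define q' where "q' = q + (p$j - q$j) *\<^sub>R axis j 1"
  have q'_near: "\<forall>i. \<bar>q'$i - p$i\<bar> \<le> d"
    using insert.prems(1) qj by (auto simp: q'_def axis_def)
  have IH: "\<bar>f q' - f p\<bar> \<le> (2 ^ card I - 1) * d * D"
    unfolding D_def using insert.prems insert.hyps(2) q'_near
    by (intro insert.IH) (auto simp: q'_def axis_def)
  have "\<bar>f (q' + (q$j - p$j) *\<^sub>R axis j 1) - f q'\<bar> \<le> \<bar>q$j - p$j\<bar> * (U - f q')"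
    using q'_near qj d
    by (intro coordinatewise_convex_axis_step[where p = p and U = U, OF f U]) (auto intro: order_trans)
  moreover have "q' + (q$j - p$j) *\<^sub>R axis j 1 = q"
    by (simp add: q'_def vec_eq_iff axis_def)
  ultimately have step: "\<bar>f q - f q'\<bar> \<le> \<bar>q$j - p$j\<bar> * (U - f q')"
    by simp
  \<comment> \<open>each coordinate step at most doubles the Lipschitz constant U - f\<close>
  have "f q' \<le> U"
  proof (rule U, rule allI)
    show "\<bar>q'$i - p$i\<bar> \<le> 2" for i using q'_near[rule_format, of i] d by linarith
  qed
  then have "0 \<le> U - f q'" by simp
  moreover have "U - f q' \<le> 2 ^ card I * D"
  proof -
    have "(2 ^ card I - 1) * d * D \<le> (2 ^ card I - 1) * D"
      using d D by (intro mult_right_mono) (auto simp: mult_left_le)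
    then show ?thesis using IH by (simp add: D_def algebra_simps abs_le_iff)
  qed
  ultimately have "\<bar>f q - f q'\<bar> \<le> d * (2 ^ card I * D)"
    using step qj by (meson abs_ge_zero mult_mono order_trans)
  with IH insert.hyps show ?case
    by (simp add: D_def algebra_simps)
qed

lemma coordinatewise_convex_imp_isCont:
  fixes f :: "real ^ 'n \<Rightarrow> real"
  assumes f: "coordinatewise_convex f"
  shows "isCont f p"
proof -
  obtain U where U: "\<And>q. \<forall>i. \<bar>q$i - p$i\<bar> \<le> 2 \<Longrightarrow> f q \<le> U"
    using coordinatewise_convex_bounded_above_on_box[OF f] by blast
  define C where "C = (2 ^ CARD('n) - 1) * (U - f p)"
  have "\<bar>f q - f p\<bar> \<le> C * dist q p" if "dist q p < 1" for q
  proof -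
    have "\<forall>i. \<bar>q$i - p$i\<bar> \<le> dist q p"
      by (metis component_le_norm_cart dist_norm vector_minus_component)
    then show ?thesis
      using coordinatewise_convex_local_estimate[OF f U _ finite_class.finite_UNIV] that
      by (simp add: C_def mult_ac)
  qed
  then have "eventually (\<lambda>q. norm (f q - f p) \<le> C * dist q p) (at p)"
    unfolding eventually_at by (auto intro!: exI[of _ 1])
  moreover have "((\<lambda>q. C * dist q p) \<longlongrightarrow> 0) (at p)"
    by (intro tendsto_eq_intros) auto
  ultimately have "((\<lambda>q. f q - f p) \<longlongrightarrow> 0) (at p)"
    by (rule Lim_null_comparison)
  then show ?thesis
    unfolding isCont_def by (rule LIM_zero_cancel)
qed

lemma convex21_imp_coordinatewise_convex:
  assumes "convex21 f"
  shows "coordinatewise_convex f"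
proof -
  have "(axis i 1 :: pt3)$3 = 0 \<or> ((axis i 1 :: pt3)$1 = 0 \<and> (axis i 1 :: pt3)$2 = 0)" for i
    using exhaust_3[of i] by (auto simp: axis_def)
  then show ?thesis
    using assms unfolding convex21_def coordinatewise_convex_def by blast
qed

lemma convex21_convex_on_line:
  assumes "convex21 f" and "horiz_pair a b \<or> vert_pair a b"
  shows "convex_on UNIV (\<lambda>t. f (a + t *\<^sub>R (b - a)))"
  using assms unfolding convex21_def horiz_pair_def vert_pair_def by auto

lemma norm_lt_max_norm_add_diff:
  fixes e w :: "'a::real_inner"
  assumes "w \<noteq> 0"
  shows "norm e < max (norm (e + w)) (norm (e - w))"
proof -
  have "norm (e + w) ^ 2 + norm (e - w) ^ 2 = 2 * norm e ^ 2 + 2 * norm w ^ 2"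
    unfolding power2_norm_eq_inner by (simp add: inner_add inner_diff algebra_simps)
  moreover have "norm (e + w) ^ 2 \<le> max (norm (e + w)) (norm (e - w)) ^ 2"
    and "norm (e - w) ^ 2 \<le> max (norm (e + w)) (norm (e - w)) ^ 2"
    by (auto intro!: power_mono simp: le_max_iff_disj)
  moreover have "0 < norm w ^ 2" using assms by simp
  ultimately have "norm e ^ 2 < max (norm (e + w)) (norm (e - w)) ^ 2"
    by linarith
  then show ?thesis by (rule power_less_imp_less_base) (simp add: le_max_iff_disj)
qed

lemma farthest_maximizer_notin_open_segment:
  fixes f :: "'a::real_inner \<Rightarrow> real"
  assumes conv: "convex_on UNIV (\<lambda>t. f (a + t *\<^sub>R (b - a)))"
    and seg: "open_segment a b \<subseteq> A" and e: "e \<in> open_segment a b"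
    and fmax: "\<And>y. y \<in> A \<Longrightarrow> f y \<le> f e"
    and nmax: "\<And>y. y \<in> A \<Longrightarrow> f y = f e \<Longrightarrow> norm y \<le> norm e"
  shows False
proof -
  define v where "v = b - a"
  obtain u where u: "a \<noteq> b" "0 < u" "u < 1" "e = (1 - u) *\<^sub>R a + u *\<^sub>R b"
    using e by (auto simp: in_segment)
  have e_v: "e = a + u *\<^sub>R v" by (simp add: u(4) v_def algebra_simps)
  define h where "h = min u (1 - u) / 2"
  have h: "0 < h" "0 < u - h" "u + h < 1" using u by (auto simp: h_def min_def field_simps)
  have on_seg: "a + t *\<^sub>R v \<in> A" if "0 < t" "t < 1" for t
  proof -
    have "(1 - t) *\<^sub>R a + t *\<^sub>R b \<in> open_segment a b"
      using that u(1) unfolding in_segment by blast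
    moreover have "a + t *\<^sub>R v = (1 - t) *\<^sub>R a + t *\<^sub>R b" by (simp add: v_def algebra_simps)
    ultimately show ?thesis using seg by auto
  qed
  have plus: "e + h *\<^sub>R v \<in> A" and minus: "e - h *\<^sub>R v \<in> A"
    using on_seg[of "u + h"] on_seg[of "u - h"] h by (auto simp: e_v algebra_simps)
  have "f e = f (a + ((1 - 1/2) *\<^sub>R (u + h) + (1/2) *\<^sub>R (u - h)) *\<^sub>R v)"
    by (simp add: e_v field_simps)
  also have "\<dots> \<le> (1 - 1/2) * f (a + (u + h) *\<^sub>R v) + (1/2) * f (a + (u - h) *\<^sub>R v)"
    using convex_onD[OF conv, of "1/2" "u + h" "u - h"] by (simp add: v_def)
  also have "\<dots> = (f (e + h *\<^sub>R v) + f (e - h *\<^sub>R v)) / 2"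
    by (simp add: e_v algebra_simps)
  finally have "f (e + h *\<^sub>R v) = f e" "f (e - h *\<^sub>R v) = f e"
    using fmax[OF plus] fmax[OF minus] by auto
  then have "norm (e + h *\<^sub>R v) \<le> norm e" "norm (e - h *\<^sub>R v) \<le> norm e"
    using nmax[OF plus] nmax[OF minus] by auto
  moreover have "h *\<^sub>R v \<noteq> 0" using h u(1) by (simp add: v_def)
  ultimately show False
    using norm_lt_max_norm_add_diff[of "h *\<^sub>R v" e] by linarith
qed

lemma convex21_attains_max_on_Extr:
  assumes A: "compact A" "A \<noteq> {}" and f: "convex21 f"
  obtains e where "e \<in> Extr A" "\<And>y. y \<in> A \<Longrightarrow> f y \<le> f e"
proof -
  have cont: "continuous_on S f" for S
    using coordinatewise_convex_imp_isCont[OF convex21_imp_coordinatewise_convex[OF f]]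
    by (simp add: continuous_at_imp_continuous_on)
  obtain m where m: "m \<in> A" "\<forall>y\<in>A. f y \<le> f m"
    using continuous_attains_sup[OF A cont] by blast
  define M where "M = {y \<in> A. f y = f m}"
  have "compact M"
    unfolding M_def Collect_conj_eq Collect_mem_eq
    by (intro compact_Int_closed A closed_Collect_eq cont continuous_on_const)
  moreover have "M \<noteq> {}" using m by (auto simp: M_def)
  ultimately obtain e where e: "e \<in> M" "\<And>y. y \<in> M \<Longrightarrow> norm y \<le> norm e"
    by (metis continuous_attains_sup continuous_on_norm_id)
  have e_max: "\<And>y. y \<in> A \<Longrightarrow> f y \<le> f e"
    using m e(1) by (simp add: M_def)
  have e_far: "\<And>y. y \<in> A \<Longrightarrow> f y = f e \<Longrightarrow> norm y \<le> norm e"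
    using e by (simp add: M_def)
  have "e \<in> Extr A"
    unfolding Extr_def
  proof (intro CollectI conjI notI)
    show "e \<in> A" using e by (simp add: M_def)
    assume "\<exists>a b. (horiz_pair a b \<or> vert_pair a b) \<and> open_segment a b \<subseteq> A \<and> e \<in> open_segment a b"
    then obtain a b where ab: "horiz_pair a b \<or> vert_pair a b"
      and seg: "open_segment a b \<subseteq> A" and e_seg: "e \<in> open_segment a b"
      by blast
    show False
      by (rule farthest_maximizer_notin_open_segment
          [OF convex21_convex_on_line[OF f ab] seg e_seg e_max e_far])
  qed
  then show ?thesis using e_max by (rule that)
qed

lemma compact_subset_rc_hull_Extr:
  assumes "compact A"
  shows "A \<subseteq> rc_hull (Extr A)"
proof
  fix x assume x: "x \<in> A"
  show "x \<in> rc_hull (Extr A)"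
    unfolding rc_hull_def
  proof (intro CollectI allI impI)
    fix f :: "pt3 \<Rightarrow> real" and c
    assume f: "convex21 f" and c: "\<forall>y\<in>Extr A. f y \<le> c"
    obtain e where "e \<in> Extr A" "f x \<le> f e"
      using convex21_attains_max_on_Extr[OF assms _ f] x by blast
    with c show "f x \<le> c" by force
  qed
qed

lemma complex_element_bounded:
  assumes "complex_element L E"
  shows "bounded E"
proof -
  have "bounded (rel_interior (convex hull S))" if "finite S" for S :: "pt3 set"
    using bounded_subset[OF finite_imp_bounded_convex_hull[OF that] rel_interior_subset] .
  then show ?thesis
    using assms unfolding complex_element_def low_element_def
    by (elim disjE exE conjE) (auto intro: bounded_open_segment)
qed

lemma complex21_compact:
  assumes "complex21 A"
  shows "compact A"
proof -
  obtain L where L: "closed A" "finite L" "A = \<Union>L" "\<forall>E\<in>L. complex_element L E"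
    using assms unfolding complex21_def by blast
  have "bounded A"
    unfolding L(3) using L(2,4) by (auto intro!: bounded_Union intro: complex_element_bounded)
  with L(1) show ?thesis by (simp add: compact_eq_bounded_closed)
qed

theorem lemma2p4:
  fixes A :: "(real ^ 3) set"
  assumes "complex21 A"
  shows "A \<subseteq> rc_hull (Extr A)"
  using compact_subset_rc_hull_Extr[OF complex21_compact[OF assms]] .

end
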